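(* Let $L=(l_1,\dots,l_n)$, $n\ge 4$, be a generic length vector satisfying the strict triangle inequality, and let $l_a\ge l_b\ge l_c$ be its three largest entries (for distinct indices $a,b,c$). (1) If $l_b+l_c<|L|/2$ (i.e. the moduli space of $L$ is connected), then any two vertices of $\Gamma(L)$ are connected by a path in $\Gamma(L)$ of length at most $13$. (2) If $l_b+l_c>|L|/2$ (i.e. the moduli space of $L$ is disconnected), then any two vertices of $\Gamma(L)$ lying in the same connected component of $\Gamma(L)$ are connected by a path in $\Gamma(L)$ of length at most $7$.
   Context: Let $n\ge 4$ and $L=(l_1,\dots,l_n)$ be positive reals with $l_i<\sum_{j\ne i}l_j$ for every $i$ (strict triangle inequality), and generic: there is no $J\subseteq[n]$ with $\sum_{i\in J}l_i=\sum_{i\notin J}l_i$. Here $[n]=\{1,\dots,n\}$ and $|L|=\sum_{i=1}^n l_i$. A set $I\subseteq[n]$ is short if $\sum_{i\in I}l_i<|L|/2$ and long otherwise. A cyclically ordered partition of $[n]$ into $k$ parts is a sequence $(A_1,\dots,A_k)$ of pairwise disjoint nonempty sets with union $[n]$, considered up to cyclic shifts $(A_1,\dots,A_k)\sim(A_2,\dots,A_k,A_1)$; there is no ordering inside a part. It is admissible if every part is short. The graph $\Gamma(L)$ has as vertices the admissible cyclically ordered partitions of $[n]$ into 3 parts, written $(I,J,K)$, and as edges the admissible cyclically ordered partitions into 4 parts $(A,B,C,D)$; such an edge is incident to each of the partitions $(A\cup B,C,D)$, $(A,B\cup C,D)$, $(A,B,C\cup D)$, $(D\cup A,B,C)$ that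 is admissible. Equivalently, two vertices are adjacent iff one is obtained from the other by moving a nonempty proper subset of one part into another part. The length of a path is its number of edges. ($\Gamma(L)$ is the 1-skeleton of a cell decomposition of the moduli space of planar configurations of $L$ modulo orientation-preserving isometries.) *)

theory Defs
  imports Complex_Main
begin

text \<open>Length vectors are functions l :: nat => real, only values on {1..n} matter.
  A cyclically ordered partition into k parts is represented by a list of k sets;
  two lists represent the same cyclically ordered partition iff one is a rotation of the other.\<close>

definition total_len :: "(nat \<Rightarrow> real) \<Rightarrow> nat \<Rightarrow> real" where
  "total_len l n = (\<Sum>i\<in>{1..n}. l i)"

definition short :: "(nat \<Rightarrow> real) \<Rightarrow> nat \<Rightarrow> nat set \<Rightarrow> bool" where
  "short l n I \<longleftrightarrow> (\<Sum>i\<in>I. l i) < total_len l n / 2"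

definition length_vector :: "(nat \<Rightarrow> real) \<Rightarrow> nat \<Rightarrow> bool" where
  "length_vector l n \<longleftrightarrow> (\<forall>i\<in>{1..n}. 0 < l i)"

definition strict_triangle :: "(nat \<Rightarrow> real) \<Rightarrow> nat \<Rightarrow> bool" where
  "strict_triangle l n \<longleftrightarrow> (\<forall>i\<in>{1..n}. l i < (\<Sum>j\<in>{1..n} - {i}. l j))"

definition generic :: "(nat \<Rightarrow> real) \<Rightarrow> nat \<Rightarrow> bool" where
  "generic l n \<longleftrightarrow> (\<forall>J. J \<subseteq> {1..n} \<longrightarrow> (\<Sum>i\<in>J. l i) \<noteq> (\<Sum>i\<in>{1..n} - J. l i))"

definition cyc_eq :: "nat set list \<Rightarrow> nat set list \<Rightarrow> bool" where
  "cyc_eq xs ys \<longleftrightarrow> (\<exists>k. ys = rotate k xs)"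

definition ordered_partition :: "nat \<Rightarrow> nat set list \<Rightarrow> bool" where
  "ordered_partition n xs \<longleftrightarrow>
     (\<forall>A\<in>set xs. A \<noteq> {}) \<and>
     (\<forall>i<length xs. \<forall>j<length xs. i \<noteq> j \<longrightarrow> xs ! i \<inter> xs ! j = {}) \<and>
     \<Union>(set xs) = {1..n}"

definition admissible :: "(nat \<Rightarrow> real) \<Rightarrow> nat \<Rightarrow> nat set list \<Rightarrow> bool" where
  "admissible l n xs \<longleftrightarrow> ordered_partition n xs \<and> (\<forall>A\<in>set xs. short l n A)"

definition gvertex :: "(nat \<Rightarrow> real) \<Rightarrow> nat \<Rightarrow> nat set list \<Rightarrow> bool" where
  "gvertex l n xs \<longleftrightarrow> admissible l n xs \<and> length xs = 3"

definition merge4 :: "nat set list \<Rightarrow> nat \<Rightarrow> nat set list" where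
  "merge4 e i = (case i of
      0 \<Rightarrow> [e!0 \<union> e!1, e!2, e!3]
    | Suc 0 \<Rightarrow> [e!0, e!1 \<union> e!2, e!3]
    | Suc (Suc 0) \<Rightarrow> [e!0, e!1, e!2 \<union> e!3]
    | _ \<Rightarrow> [e!3 \<union> e!0, e!1, e!2])"

text \<open>u and v are joined by an edge: an admissible cyclically ordered 4-partition
  incident to both (through two different merges).\<close>
definition gadj :: "(nat \<Rightarrow> real) \<Rightarrow> nat \<Rightarrow> nat set list \<Rightarrow> nat set list \<Rightarrow> bool" where
  "gadj l n u v \<longleftrightarrow> gvertex l n u \<and> gvertex l n v \<and>
     (\<exists>e. admissible l n e \<and> length e = 4 \<and>
        (\<exists>i<4. \<exists>j<4. i \<noteq> j \<and> cyc_eq (merge4 e i) u \<and> cyc_eq (merge4 e j) v))"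

definition path_le :: "(nat \<Rightarrow> real) \<Rightarrow> nat \<Rightarrow> nat \<Rightarrow> nat set list \<Rightarrow> nat set list \<Rightarrow> bool" where
  "path_le l n k u v \<longleftrightarrow>
     (\<exists>ps. ps \<noteq> [] \<and> length ps \<le> k + 1 \<and>
        cyc_eq (ps ! 0) u \<and> cyc_eq (ps ! (length ps - 1)) v \<and>
        (\<forall>i. i + 1 < length ps \<longrightarrow> gadj l n (ps ! i) (ps ! (i + 1))))"

definition same_component :: "(nat \<Rightarrow> real) \<Rightarrow> nat \<Rightarrow> nat set list \<Rightarrow> nat set list \<Rightarrow> bool" where
  "same_component l n u v \<longleftrightarrow> (\<exists>k. path_le l n k u v)"

end

theory Submission
  imports Defs
begin

text \<open>
  Let \<open>a\<close> be the longest side and write \<open>X\<^sup>c = [n] - {a} - X\<close>. A vertex \<open>(A, B, C)\<close> with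
  \<open>a \<in> A\<close> reaches a vertex \<open>({a}, X, X\<^sup>c)\<close> in two moves: greedily transfer elements of \<open>A - {a}\<close>
  to \<open>B\<close> while \<open>B\<close> stays short, then the rest to \<open>C\<close>, which stays short because the first
  element that did not fit into \<open>B\<close> is no longer than \<open>a\<close>. Two such vertices are adjacent when \<open>X \<subseteq> Y\<close>.

  If \<open>l\<^sub>b + l\<^sub>c < |L|/2\<close>, the vertices \<open>({a}, X, X\<^sup>c)\<close> and \<open>({a}, X\<^sup>c, X)\<close> are at distance at most 5:
  either all elements of one side are shorter than \<open>|L|/2 - l\<^sub>a\<close>, and \<open>a\<close> is walked around a
  suitable two-piece subset of that side, or both sides contain a longer element, and one passes
  through the singletons and the pair of these two elements. Comparing \<open>X\<close> with \<open>Y\<close> through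
  \<open>X \<inter> Y\<close>, through \<open>X - Y\<close> and \<open>Y\<^sup>c\<close>, or by a direct exchange of \<open>X - Y\<close> gives distance at most 7
  between any two such vertices, hence diameter at most \<open>2 + 7 + 2\<close>.

  If \<open>l\<^sub>b + l\<^sub>c > |L|/2\<close>, any two of \<open>a, b, c\<close> lie in different parts, so their cyclic order is
  preserved along edges. Each vertex reaches \<open>({a}, {b}, rest)\<close> or \<open>({a}, {c}, rest)\<close>, according
  to this order, in two moves, so vertices of the same component are at distance at most 4.
\<close>

section \<open>Vertices, edges and walks\<close>

lemma cyc_eq_refl [simp]: "cyc_eq xs xs"
  unfolding cyc_eq_def by (rule exI[of _ 0]) simp

lemma cyc_eq_rotate: "cyc_eq xs (rotate k xs)"
  unfolding cyc_eq_def by blast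

lemma cyc_eq_trans: "cyc_eq xs ys \<Longrightarrow> cyc_eq ys zs \<Longrightarrow> cyc_eq xs zs"
  unfolding cyc_eq_def by (auto simp: rotate_rotate)

lemma cyc_eq_sym:
  assumes "cyc_eq xs ys"
  shows "cyc_eq ys xs"
proof -
  obtain k where ys: "ys = rotate k xs"
    using assms by (auto simp: cyc_eq_def)
  have "rotate (length xs * k - k) ys = xs"
  proof (cases "xs = []")
    case False
    then have "length xs * k - k + k = length xs * k"
      by (simp add: Suc_le_eq)
    then show ?thesis
      unfolding ys rotate_rotate by (simp add: rotate_conv_mod[of "length xs * k"])
  qed (simp add: ys)
  then show ?thesis
    unfolding cyc_eq_def by metis
qed

lemma cyc_eq_rotate3: "cyc_eq [X, Y, Z] [Y, Z, X]" "cyc_eq [X, Y, Z] [Z, X, Y]"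
  using cyc_eq_rotate[of "[X, Y, Z]" 1] cyc_eq_rotate[of "[X, Y, Z]" 2]
  by (simp_all add: numeral_eq_Suc)

lemma rotate3_cases:
  "rotate k [X, Y, Z] = [X, Y, Z] \<or> rotate k [X, Y, Z] = [Y, Z, X] \<or> rotate k [X, Y, Z] = [Z, X, Y]"
proof (induction k)
  case (Suc k)
  then show ?case by (elim disjE) simp_all
qed simp

lemma gvertex_iff:
  "gvertex l n [X, Y, Z] \<longleftrightarrow>
     X \<noteq> {} \<and> Y \<noteq> {} \<and> Z \<noteq> {} \<and> X \<inter> Y = {} \<and> X \<inter> Z = {} \<and> Y \<inter> Z = {} \<and>
     X \<union> Y \<union> Z = {1..n} \<and> short l n X \<and> short l n Y \<and> short l n Z"
  unfolding gvertex_def admissible_def ordered_partition_def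
  by (simp add: All_less_Suc2 Int_commute conj_commute conj_left_commute Un_assoc)

lemma admissible4_iff:
  "admissible l n [A, B, C, D] \<longleftrightarrow>
     A \<noteq> {} \<and> B \<noteq> {} \<and> C \<noteq> {} \<and> D \<noteq> {} \<and>
     A \<inter> B = {} \<and> A \<inter> C = {} \<and> A \<inter> D = {} \<and> B \<inter> C = {} \<and> B \<inter> D = {} \<and> C \<inter> D = {} \<and>
     A \<union> B \<union> C \<union> D = {1..n} \<and> short l n A \<and> short l n B \<and> short l n C \<and> short l n D"
  unfolding admissible_def ordered_partition_def
  by (simp add: All_less_Suc2 Int_commute conj_commute conj_left_commute Un_assoc)

lemma gvertexD:
  assumes "gvertex l n [X, Y, Z]"
  shows "X \<noteq> {}" "Y \<noteq> {}" "Z \<noteq> {}" "X \<inter> Y = {}" "X \<inter> Z = {}" "Y \<inter> Z = {}"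
    "X \<union> Y \<union> Z = {1..n}" "short l n X" "short l n Y" "short l n Z"
  using assms unfolding gvertex_iff by simp_all

lemma gvertexE:
  assumes "gvertex l n u"
  obtains X Y Z where "u = [X, Y, Z]"
  using assms unfolding gvertex_def by (auto simp: length_Suc_conv numeral_eq_Suc)

lemma gvertex_rotate3: "gvertex l n [Y, Z, X] \<longleftrightarrow> gvertex l n [X, Y, Z]"
  unfolding gvertex_iff by blast

lemma gvertex_cyc_eq:
  assumes "gvertex l n u" "cyc_eq u v"
  shows "gvertex l n v"
proof -
  obtain X Y Z where u: "u = [X, Y, Z]"
    using assms(1) by (rule gvertexE)
  obtain k where "v = rotate k u"
    using assms(2) unfolding cyc_eq_def by blast
  then show ?thesis
    using rotate3_cases[of k X Y Z] assms(1) unfolding u by (auto simp: gvertex_rotate3)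
qed

lemma gadj_sym: "gadj l n u v \<Longrightarrow> gadj l n v u"
  unfolding gadj_def by blast

lemma gadj_cyc_eq:
  assumes "gadj l n u v" "cyc_eq u u'" "cyc_eq v v'"
  shows "gadj l n u' v'"
  using assms gvertex_cyc_eq cyc_eq_trans unfolding gadj_def by meson

inductive reach :: "(nat \<Rightarrow> real) \<Rightarrow> nat \<Rightarrow> nat \<Rightarrow> nat set list \<Rightarrow> nat set list \<Rightarrow> bool"
  for l n where
  reach_cyc_eq: "cyc_eq u v \<Longrightarrow> reach l n k u v"
| reach_snoc: "reach l n k u w \<Longrightarrow> gadj l n w v \<Longrightarrow> reach l n (Suc k) u v"

lemma reach_refl: "reach l n k u u"
  by (simp add: reach_cyc_eq)

lemma reach_edge: "gadj l n u v \<Longrightarrow> reach l n 1 u v"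
  using reach_snoc[OF reach_refl] by simp

lemma reach_mono: "reach l n k u v \<Longrightarrow> k \<le> k' \<Longrightarrow> reach l n k' u v"
proof (induction arbitrary: k' rule: reach.induct)
  case (reach_cyc_eq u v k)
  then show ?case by (simp add: reach.reach_cyc_eq)
next
  case (reach_snoc k u w v)
  then obtain k'' where k'': "k' = Suc k''" "k \<le> k''"
    by (cases k') auto
  have "reach l n k'' u w"
    using reach_snoc.IH k''(2) .
  then show ?case
    unfolding k''(1) using reach_snoc.hyps(2) by (rule reach.reach_snoc)
qed

lemma reach_cyc_eq_right: "reach l n k u v \<Longrightarrow> cyc_eq v v' \<Longrightarrow> reach l n k u v'"
proof (induction rule: reach.induct)
  case (reach_cyc_eq u v k)
  have "cyc_eq u v'"
    using reach_cyc_eq cyc_eq_trans by blast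
  then show ?case by (rule reach.reach_cyc_eq)
next
  case (reach_snoc k u w v)
  have "gadj l n w v'"
    using reach_snoc gadj_cyc_eq cyc_eq_refl by blast
  with reach_snoc.hyps(1) show ?case
    by (rule reach.reach_snoc)
qed

lemma reach_trans:
  assumes "reach l n k1 u w" "reach l n k2 w v"
  shows "reach l n (k1 + k2) u v"
  using assms(2,1)
proof (induction rule: reach.induct)
  case (reach_cyc_eq w v k)
  then have "reach l n k1 u v"
    by (simp add: reach_cyc_eq_right)
  then show ?case
    by (rule reach_mono) simp
next
  case (reach_snoc k w x v)
  then have "reach l n (Suc (k1 + k)) u v"
    by (simp add: reach.reach_snoc)
  then show ?case
    by simp
qed

lemma reach_sym: "reach l n k u v \<Longrightarrow> reach l n k v u"
proof (induction rule: reach.induct)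
  case (reach_cyc_eq u v k)
  then show ?case
    by (simp add: cyc_eq_sym reach.reach_cyc_eq)
next
  case (reach_snoc k u w v)
  have "reach l n 1 v w"
    using reach_snoc.hyps(2) by (rule reach_edge[OF gadj_sym])
  then have "reach l n (1 + k) v u"
    using reach_snoc.IH by (rule reach_trans)
  then show ?case
    by simp
qed

lemma reach_cyc_eq_both:
  "reach l n k u v \<Longrightarrow> cyc_eq u u' \<Longrightarrow> cyc_eq v v' \<Longrightarrow> reach l n k u' v'"
  by (meson reach_cyc_eq_right reach_sym)

lemma reach_imp_path_le: "reach l n k u v \<Longrightarrow> path_le l n k u v"
proof (induction rule: reach.induct)
  case (reach_cyc_eq u v k)
  then show ?case
    unfolding path_le_def by (intro exI[of _ "[u]"]) simp
next
  case (reach_snoc k u w v)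
  then obtain ps where ps: "ps \<noteq> []" "length ps \<le> k + 1" "cyc_eq (ps ! 0) u"
    "cyc_eq (ps ! (length ps - 1)) w" "\<forall>i. i + 1 < length ps \<longrightarrow> gadj l n (ps ! i) (ps ! (i + 1))"
    unfolding path_le_def by blast
  have last: "gadj l n (ps ! (length ps - 1)) v"
    using reach_snoc.hyps(2) ps(4) gadj_cyc_eq cyc_eq_sym cyc_eq_refl by blast
  have steps: "gadj l n ((ps @ [v]) ! i) ((ps @ [v]) ! (i + 1))" if "i + 1 < length (ps @ [v])" for i
  proof (cases "i + 1 < length ps")
    case True
    then show ?thesis using ps(5) by (simp add: nth_append)
  next
    case False
    then have "i = length ps - 1" using that by simp
    then show ?thesis using last ps(1) by (simp add: nth_append)
  qed
  show ?case
    unfolding path_le_def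
  proof (intro exI[of _ "ps @ [v]"] conjI allI impI)
    show "length (ps @ [v]) \<le> Suc k + 1"
      using ps(2) by simp
    show "cyc_eq ((ps @ [v]) ! 0) u"
      using ps(1,3) by (simp add: nth_append)
    show "cyc_eq ((ps @ [v]) ! (length (ps @ [v]) - 1)) v"
      by simp
  qed (simp, rule steps)
qed

lemma gvertex_rotate_to:
  assumes "gvertex l n u" "x \<in> {1..n}"
  obtains A B C where "cyc_eq u [A, B, C]" "gvertex l n [A, B, C]" "x \<in> A"
proof -
  obtain X Y Z where u: "u = [X, Y, Z]"
    using assms(1) by (rule gvertexE)
  have g: "gvertex l n [X, Y, Z]"
    using assms(1) u by simp
  then consider "x \<in> X" | "x \<in> Y" | "x \<in> Z"
    using assms(2) unfolding gvertex_iff by blast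
  then show ?thesis
  proof cases
    case 1
    then show ?thesis using that[of X Y Z] g u by simp
  next
    case 2
    then show ?thesis using that[of Y Z X] g u cyc_eq_rotate3 by (simp add: gvertex_rotate3)
  next
    case 3
    then show ?thesis using that[of Z X Y] g u cyc_eq_rotate3 by (simp add: gvertex_rotate3)
  qed
qed

section \<open>Moving elements between parts\<close>

lemma greedy_subset:
  fixes f :: "'a \<Rightarrow> real"
  assumes "finite F" "0 < t"
  shows "\<exists>G\<subseteq>F. sum f G < t \<and> (G = F \<or> (\<exists>y\<in>F - G. t \<le> sum f G + f y))"
  using assms(1)
proof (induction F rule: finite_induct)
  case empty
  then show ?case using assms(2) by auto
next
  case (insert x F)
  then obtain G where G: "G \<subseteq> F" "sum f G < t" "G = F \<or> (\<exists>y\<in>F - G. t \<le> sum f G + f y)"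
    by blast
  show ?case
  proof (cases "G = F \<and> sum f F + f x < t")
    case True
    then show ?thesis
      using insert.hyps by (intro exI[of _ "insert x F"]) (simp add: add.commute)
  next
    case False
    have "\<exists>y\<in>insert x F - G. t \<le> sum f G + f y"
    proof (cases "G = F")
      case True
      then show ?thesis
        using False insert.hyps(2) by (intro bexI[of _ x]) auto
    next
      case False
      then show ?thesis
        using G(3) by blast
    qed
    then show ?thesis
      using G by (intro exI[of _ G]) auto
  qed
qed

locale linkage =
  fixes l :: "nat \<Rightarrow> real" and n :: nat
  assumes positive: "length_vector l n"
    and triangle: "strict_triangle l n"
    and generic: "generic l n"
begin

abbreviation half :: real where
  "half \<equiv> total_len l n / 2"

lemma short_iff: "short l n X \<longleftrightarrow> sum l X < half"
  by (simp add: short_def)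

lemma l_pos: "i \<in> {1..n} \<Longrightarrow> 0 < l i"
  using positive unfolding length_vector_def by blast

lemma sum_le_sum_subset: "X \<subseteq> Y \<Longrightarrow> Y \<subseteq> {1..n} \<Longrightarrow> sum l X \<le> sum l Y"
proof (rule sum_mono2)
  show "finite Y" if "Y \<subseteq> {1..n}"
    using that finite_subset by blast
  show "0 \<le> l i" if "X \<subseteq> Y" "Y \<subseteq> {1..n}" "i \<in> Y - X" for i
    using l_pos that by (meson DiffD1 less_imp_le subsetD)
qed

lemma short_subset:
  assumes "X \<subseteq> Y" "Y \<subseteq> {1..n}" "short l n Y"
  shows "short l n X"
  using sum_le_sum_subset[OF assms(1,2)] assms(3) unfolding short_iff by linarith

lemma sum_Diff_subset: "X \<subseteq> Y \<Longrightarrow> Y \<subseteq> {1..n} \<Longrightarrow> sum l (Y - X) = sum l Y - sum l X"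
  by (rule sum_diff) (auto intro: finite_subset)

lemma sum_Un_disjoint:
  "X \<subseteq> {1..n} \<Longrightarrow> Y \<subseteq> {1..n} \<Longrightarrow> X \<inter> Y = {} \<Longrightarrow> sum l (X \<union> Y) = sum l X + sum l Y"
  by (rule sum.union_disjoint) (auto intro: finite_subset)

lemma sum_compl: "J \<subseteq> {1..n} \<Longrightarrow> sum l ({1..n} - J) = total_len l n - sum l J"
  unfolding total_len_def by (rule sum_Diff_subset) auto

lemma sum_ne_half:
  assumes "J \<subseteq> {1..n}"
  shows "sum l J \<noteq> half"
proof
  assume "sum l J = half"
  then have "sum l J = sum l ({1..n} - J)"
    using sum_compl[OF assms] by simp
  then show False
    using generic assms unfolding generic_def by blast
qed

lemma singleton_short:
  assumes "i \<in> {1..n}"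
  shows "l i < half"
proof -
  have "l i < sum l ({1..n} - {i})"
    using triangle assms unfolding strict_triangle_def by blast
  then show ?thesis
    using sum_compl[of "{i}"] assms by simp
qed

lemma gvertex_sum:
  assumes "gvertex l n [X, Y, Z]"
  shows "sum l X + sum l Y + sum l Z = total_len l n"
proof -
  have cover: "X \<union> Y \<union> Z = {1..n}" and disj: "X \<inter> Y = {}" "(X \<union> Y) \<inter> Z = {}"
    using assms unfolding gvertex_iff by blast+
  then have sub: "X \<subseteq> {1..n}" "Y \<subseteq> {1..n}" "Z \<subseteq> {1..n}"
    by blast+
  have "total_len l n = sum l (X \<union> Y) + sum l Z"
    unfolding total_len_def cover[symmetric] using sub disj(2) by (intro sum_Un_disjoint) auto
  also have "\<dots> = sum l X + sum l Y + sum l Z"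
    using sub disj(1) sum_Un_disjoint[of X Y] by simp
  finally show ?thesis ..
qed

lemma gvertex_resplit:
  assumes "gvertex l n [X, Y, Z]" "X' \<union> Y' = X \<union> Y" "X' \<inter> Y' = {}" "X' \<noteq> {}" "Y' \<noteq> {}"
    "short l n X'" "short l n Y'"
  shows "gvertex l n [X', Y', Z]"
proof -
  have "X \<union> Y \<union> Z = {1..n}" "(X \<union> Y) \<inter> Z = {}" "Z \<noteq> {}" "short l n Z"
    using assms(1) unfolding gvertex_iff by blast+
  then show ?thesis
    unfolding gvertex_iff using assms(2-7) by (metis Int_Un_distrib2 Un_empty)
qed

lemma reach_move_next:
  assumes u: "gvertex l n [X, Y, Z]" and v: "gvertex l n [X', Y', Z]" and "X' \<subseteq> X" "Y \<subseteq> Y'"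
  shows "reach l n 1 [X, Y, Z] [X', Y', Z]"
proof (cases "X' = X")
  case True
  then have "Y' = Y"
    using gvertexD(4,6,7)[OF u] gvertexD(4,6,7)[OF v] assms(4) by blast
  then show ?thesis
    using True by (simp add: reach_refl)
next
  case False
  note U = gvertexD[OF u] and V = gvertexD[OF v]
  define S where "S = X - X'"
  have XU: "X' \<union> S = X"
    using assms(3) unfolding S_def by blast
  have YU: "S \<union> Y = Y'"
    using U(5,7) V(4,6,7) assms(3,4) unfolding S_def by blast
  have "S \<noteq> {}"
    using False assms(3) unfolding S_def by blast
  moreover have "short l n S"
    using short_subset[of S X] U(7,8) unfolding S_def by blast
  moreover have "X' \<union> S \<union> Y \<union> Z = {1..n}"
    using XU U(7) by blast
  moreover have "X' \<inter> S = {}" "X' \<inter> Y = {}" "S \<inter> Y = {}" "S \<inter> Z = {}"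
    using assms(3) U(4,5) unfolding S_def by blast+
  ultimately have "admissible l n [X', S, Y, Z]"
    unfolding admissible4_iff using U(2,3,6,9,10) V(1,5,8) by simp
  moreover have "merge4 [X', S, Y, Z] 0 = [X, Y, Z]" "merge4 [X', S, Y, Z] 1 = [X', Y', Z]"
    using XU YU by (simp_all add: merge4_def)
  ultimately have "gadj l n [X, Y, Z] [X', Y', Z]"
    unfolding gadj_def using u v by (intro conjI exI[of _ "[X', S, Y, Z]"] exI[of _ 0] exI[of _ 1]) simp_all
  then show ?thesis
    by (rule reach_edge)
qed

lemma reach_move_prev:
  assumes u: "gvertex l n [X, Y, Z]" and v: "gvertex l n [X', Y, Z']" and "X' \<subseteq> X" "Z \<subseteq> Z'"
  shows "reach l n 1 [X, Y, Z] [X', Y, Z']"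
proof -
  have "gvertex l n [Z, X, Y]" "gvertex l n [Z', X', Y]"
    using u v by (simp_all add: gvertex_rotate3)
  then have "reach l n 1 [Z', X', Y] [Z, X, Y]"
    using assms(3,4) by (intro reach_move_next)
  then have "reach l n 1 [Z, X, Y] [Z', X', Y]"
    by (rule reach_sym)
  then show ?thesis
    by (rule reach_cyc_eq_both[OF _ cyc_eq_rotate3(1) cyc_eq_rotate3(1)])
qed

lemma transfer_next:
  assumes g: "gvertex l n [X, Y, Z]" and "S \<subseteq> X" "S \<noteq> X" "short l n (Y \<union> S)"
  shows "gvertex l n [X - S, Y \<union> S, Z]" "reach l n 1 [X, Y, Z] [X - S, Y \<union> S, Z]"
proof -
  note G = gvertexD[OF g]
  show g': "gvertex l n [X - S, Y \<union> S, Z]"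
    using g
  proof (rule gvertex_resplit)
    show "X - S \<union> (Y \<union> S) = X \<union> Y" "(X - S) \<inter> (Y \<union> S) = {}" "X - S \<noteq> {}" "Y \<union> S \<noteq> {}"
      using assms(2,3) G(2,4) by blast+
    show "short l n (X - S)" "short l n (Y \<union> S)"
      using short_subset[of "X - S" X] G(7,8) assms(4) by blast+
  qed
  show "reach l n 1 [X, Y, Z] [X - S, Y \<union> S, Z]"
    using g g' by (rule reach_move_next) auto
qed

lemma transfer_prev:
  assumes g: "gvertex l n [X, Y, Z]" and "S \<subseteq> X" "S \<noteq> X" "short l n (Z \<union> S)"
  shows "gvertex l n [X - S, Y, Z \<union> S]" "reach l n 1 [X, Y, Z] [X - S, Y, Z \<union> S]"
proof -
  note G = gvertexD[OF g]
  have "gvertex l n [Z, X, Y]"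
    using g gvertex_rotate3 by blast
  then have "gvertex l n [Z \<union> S, X - S, Y]"
  proof (rule gvertex_resplit)
    show "Z \<union> S \<union> (X - S) = Z \<union> X" "(Z \<union> S) \<inter> (X - S) = {}" "Z \<union> S \<noteq> {}" "X - S \<noteq> {}"
      using assms(2,3) G(3,5) by blast+
    show "short l n (Z \<union> S)" "short l n (X - S)"
      using short_subset[of "X - S" X] G(7,8) assms(4) by blast+
  qed
  then show g': "gvertex l n [X - S, Y, Z \<union> S]"
    using gvertex_rotate3 by blast
  show "reach l n 1 [X, Y, Z] [X - S, Y, Z \<union> S]"
    using g g' by (rule reach_move_prev) auto
qed

end

section \<open>The connected case\<close>

locale linkage_top = linkage +
  fixes a b c :: nat
  assumes a_in: "a \<in> {1..n}" and b_in: "b \<in> {1..n}" and c_in: "c \<in> {1..n}"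
    and a_ne_b: "a \<noteq> b" and a_ne_c: "a \<noteq> c" and b_ne_c: "b \<noteq> c"
    and lb_le_la: "l b \<le> l a" and lc_le_lb: "l c \<le> l b"
    and l_le_lc: "\<forall>i\<in>{1..n} - {a, b, c}. l i \<le> l c"
begin

lemma l_le_la:
  assumes "i \<in> {1..n}"
  shows "l i \<le> l a"
proof (cases "i \<in> {a, b, c}")
  case False
  then have "l i \<le> l c"
    using l_le_lc assms by blast
  then show ?thesis
    using lb_le_la lc_le_lb by linarith
qed (use lb_le_la lc_le_lb in auto)

lemma la_lt_half: "l a < half"
  using a_in by (rule singleton_short)

lemma pair_le_lb_lc:
  assumes "x \<in> {1..n} - {a}" "y \<in> {1..n} - {a}" "x \<noteq> y"
  shows "l x + l y \<le> l b + l c"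
proof -
  have le_lc: "l i \<le> l c" if "i \<in> {1..n} - {a}" "i \<noteq> b" for i
    using that l_le_lc by (cases "i = c") auto
  have le_lb: "l i \<le> l b" if "i \<in> {1..n} - {a}" for i
    using le_lc[OF that] lc_le_lb by (cases "i = b") auto
  show ?thesis
  proof (cases "x = b")
    case True
    then show ?thesis using le_lc[OF assms(2)] assms(3) by simp
  next
    case False
    then show ?thesis using le_lc[OF assms(1)] le_lb[OF assms(2)] by simp
  qed
qed

definition others :: "nat set" where
  "others = {1..n} - {a}"

definition solo :: "nat set \<Rightarrow> nat set list" where
  "solo X = [{a}, X, others - X]"

definition solo_part :: "nat set \<Rightarrow> bool" where
  "solo_part X \<longleftrightarrow> X \<subseteq> others \<and> half - l a < sum l X \<and> sum l X < half"

lemma others_subset: "others \<subseteq> {1..n}"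
  unfolding others_def by blast

lemma a_notin_others [simp]: "a \<notin> others"
  unfolding others_def by blast

lemma sum_insert_a: "X \<subseteq> others \<Longrightarrow> sum l (insert a X) = l a + sum l X"
  using others_subset finite_subset[of X "{1..n}"] by (subst sum.insert) auto

lemma sum_others_Diff: "X \<subseteq> others \<Longrightarrow> sum l (others - X) = total_len l n - l a - sum l X"
  using sum_Diff_subset[of X others] sum_compl[of "{a}"] others_subset a_in
  unfolding others_def by simp

lemma sum_ne_half_minus_la:
  assumes "X \<subseteq> others"
  shows "sum l X \<noteq> half - l a"
proof -
  have "sum l (insert a X) \<noteq> half"
    using assms others_subset a_in by (intro sum_ne_half) auto
  then show ?thesis
    using sum_insert_a[OF assms] by simp
qed

lemma gvertex_singleton_a: "gvertex l n [{a}, X, Z] \<longleftrightarrow> solo_part X \<and> Z = others - X"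
proof
  assume g: "gvertex l n [{a}, X, Z]"
  note G = gvertexD[OF g]
  have X: "X \<subseteq> others" and Z: "Z = others - X"
    using G(4-7) unfolding others_def by blast+
  have "sum l Z < half"
    using G(10) by (simp add: short_iff)
  then have "half - l a < sum l X"
    using sum_others_Diff[OF X] Z by simp
  then show "solo_part X \<and> Z = others - X"
    unfolding solo_part_def using X Z G(9) by (simp add: short_iff)
next
  assume "solo_part X \<and> Z = others - X"
  then have X: "X \<subseteq> others" "half - l a < sum l X" "sum l X < half" and Z: "Z = others - X"
    unfolding solo_part_def by auto
  have sum_Z: "sum l Z = total_len l n - l a - sum l X"
    using sum_others_Diff[OF X(1)] Z by simp
  have "X \<noteq> {}" "Z \<noteq> {}"
    using X(2,3) sum_Z la_lt_half by auto
  moreover have "{a} \<union> X \<union> Z = {1..n}"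
    using X(1) Z a_in unfolding others_def by blast
  moreover have "short l n {a}" "short l n X" "short l n Z"
    using la_lt_half X(2,3) sum_Z by (simp_all add: short_iff)
  ultimately show "gvertex l n [{a}, X, Z]"
    unfolding gvertex_iff using X(1) Z by auto
qed

lemma gvertex_solo: "solo_part X \<Longrightarrow> gvertex l n (solo X)"
  unfolding solo_def by (simp add: gvertex_singleton_a)

lemma solo_part_compl: "solo_part X \<Longrightarrow> solo_part (others - X)"
  unfolding solo_part_def using sum_others_Diff by auto

lemma others_Diff_Diff: "X \<subseteq> others \<Longrightarrow> others - (others - X) = X"
  by blast

lemma reach_solo_subset:
  assumes X: "solo_part X" and Y: "solo_part Y" and "X \<subseteq> Y"
  shows "reach l n 1 (solo X) (solo Y)"
proof -
  have "gvertex l n [others - X, {a}, X]" "gvertex l n [others - Y, {a}, Y]"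
    using gvertex_solo[OF X] gvertex_solo[OF Y] gvertex_rotate3 unfolding solo_def by blast+
  then have "reach l n 1 [others - X, {a}, X] [others - Y, {a}, Y]"
    using assms(3) by (intro reach_move_prev) auto
  then show ?thesis
    unfolding solo_def by (rule reach_cyc_eq_both[OF _ cyc_eq_rotate3(1) cyc_eq_rotate3(1)])
qed

lemma greedy_split_short:
  assumes g: "gvertex l n [A, B, C]" and aA: "a \<in> A"
  shows "\<exists>H\<subseteq>A - {a}. short l n (B \<union> H) \<and> short l n (C \<union> (A - {a} - H))"
proof -
  note G = gvertexD[OF g]
  define A' where "A' = A - {a}"
  have "A \<subseteq> {1..n}"
    using G(7) by blast
  then have A': "A' \<subseteq> others" "A = insert a A'"
    using aA unfolding A'_def others_def by auto
  have "finite A'"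
    using A'(1) others_subset by (auto intro: finite_subset[OF _ finite_atLeastAtMost])
  moreover have "0 < half - sum l B"
    using G(9) by (simp add: short_iff)
  ultimately obtain H where H: "H \<subseteq> A'" "sum l H < half - sum l B"
    "H = A' \<or> (\<exists>y\<in>A' - H. half - sum l B \<le> sum l H + l y)"
    using greedy_subset[of A' "half - sum l B" l] by blast
  have sub: "A' \<subseteq> {1..n}" "B \<subseteq> {1..n}" "C \<subseteq> {1..n}" "H \<subseteq> {1..n}" "A' - H \<subseteq> {1..n}"
    using A'(1) H(1) others_subset G(7) by blast+
  have disj: "B \<inter> H = {}" "C \<inter> (A' - H) = {}"
    using G(4,5) H(1) A'(2) by blast+
  have "short l n (B \<union> H)"
    using sum_Un_disjoint[of B H] sub disj H(2) by (simp add: short_iff)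
  have sum_C': "sum l (C \<union> (A' - H)) = sum l C + sum l A' - sum l H"
    using sum_Un_disjoint[of C "A' - H"] sum_Diff_subset[of H A'] sub disj H(1) by simp
  have "sum l (C \<union> (A' - H)) \<le> half"
    using H(3)
  proof
    assume "H = A'"
    then show ?thesis
      using sum_C' G(10) by (simp add: short_iff)
  next
    assume "\<exists>y\<in>A' - H. half - sum l B \<le> sum l H + l y"
    then obtain y where "y \<in> A'" "half - sum l B \<le> sum l H + l y"
      by blast
    moreover have "l y \<le> l a"
      using l_le_la \<open>y \<in> A'\<close> sub(1) by blast
    moreover have "sum l A = l a + sum l A'"
      using sum_insert_a[OF A'(1)] A'(2) by simp
    ultimately show ?thesis
      using sum_C' gvertex_sum[OF g] by linarith
  qed
  moreover have "sum l (C \<union> (A' - H)) \<noteq> half"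
    using sub by (intro sum_ne_half) blast
  ultimately have "short l n (C \<union> (A' - H))"
    by (simp add: short_iff)
  with \<open>short l n (B \<union> H)\<close> H(1) show ?thesis
    unfolding A'_def by blast
qed

lemma reach_solo_from_part:
  assumes g: "gvertex l n [A, B, C]" and aA: "a \<in> A"
  shows "\<exists>X. solo_part X \<and> reach l n 2 [A, B, C] (solo X)"
proof -
  define A' where "A' = A - {a}"
  obtain H where H: "H \<subseteq> A'" "short l n (B \<union> H)" "short l n (C \<union> (A' - H))"
    using greedy_split_short[OF g aA] unfolding A'_def by blast
  have sub: "H \<subseteq> A" "H \<noteq> A" "A' - H \<subseteq> A - H" "A' - H \<noteq> A - H" and rest: "A - H - (A' - H) = {a}"
    using aA H(1) unfolding A'_def by blast+
  note g1 = transfer_next(1)[OF g sub(1,2) H(2)] and r1 = transfer_next(2)[OF g sub(1,2) H(2)]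
  note g2 = transfer_prev(1)[OF g1 sub(3,4) H(3), unfolded rest]
    and r2 = transfer_prev(2)[OF g1 sub(3,4) H(3), unfolded rest]
  have "reach l n (1 + 1) [A, B, C] [{a}, B \<union> H, C \<union> (A' - H)]"
    using reach_trans[OF r1 r2] .
  then show ?thesis
    using g2 unfolding gvertex_singleton_a solo_def by (intro exI[of _ "B \<union> H"]) (simp add: numeral_2_eq_2)
qed

lemma reach_solo:
  assumes "gvertex l n u"
  shows "\<exists>X. solo_part X \<and> reach l n 2 u (solo X)"
proof -
  obtain A B C where u: "cyc_eq u [A, B, C]" and "gvertex l n [A, B, C]" "a \<in> A"
    using assms a_in by (rule gvertex_rotate_to)
  then obtain X where "solo_part X" "reach l n 2 [A, B, C] (solo X)"
    using reach_solo_from_part by blast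
  then show ?thesis
    using reach_cyc_eq_both[OF _ cyc_eq_sym[OF u] cyc_eq_refl] by blast
qed

lemma reach_solo_compl_split:
  assumes X: "solo_part X" and split: "X1 \<union> X2 = X" "X1 \<inter> X2 = {}" "X1 \<noteq> {}" "X2 \<noteq> {}"
    and small: "l a + sum l X1 < half" "l a + sum l X2 < half"
  shows "reach l n 3 (solo X) (solo (others - X))"
proof -
  define Y where "Y = others - X"
  have XO: "X \<subseteq> others" and X1O: "X1 \<subseteq> others" and X2O: "X2 \<subseteq> others"
    using X split(1) unfolding solo_part_def by blast+
  have g0: "gvertex l n [{a}, X, Y]"
    using gvertex_solo[OF X] unfolding solo_def Y_def .
  have g3: "gvertex l n [X, {a}, Y]"
  proof -
    have "gvertex l n [{a}, Y, X]"
      using gvertex_solo[OF solo_part_compl[OF X]] others_Diff_Diff[OF XO] unfolding solo_def Y_def by simp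
    then show ?thesis
      using gvertex_rotate3 by blast
  qed
  have X_short: "short l n X"
    using gvertexD(8)[OF g3] .
  have X_sub: "X \<subseteq> {1..n}"
    using XO others_subset by blast
  have short_parts: "short l n (insert a X1)" "short l n (insert a X2)" "short l n X1" "short l n X2"
    using small sum_insert_a[OF X1O] sum_insert_a[OF X2O]
      short_subset[OF _ X_sub X_short, of X1] short_subset[OF _ X_sub X_short, of X2] split(1)
    by (auto simp: short_iff)
  have a_notin: "a \<notin> X1" "a \<notin> X2"
    using X1O X2O by auto
  have g1: "gvertex l n [insert a X1, X2, Y]"
    using g0 by (rule gvertex_resplit) (use split a_notin short_parts in auto)
  have g2: "gvertex l n [X1, insert a X2, Y]"
    using g0 by (rule gvertex_resplit) (use split a_notin short_parts in auto)
  have "reach l n 1 [insert a X1, X2, Y] [{a}, X, Y]"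
    using g1 g0 split(1) by (intro reach_move_next) auto
  then have r1: "reach l n 1 [{a}, X, Y] [insert a X1, X2, Y]"
    by (rule reach_sym)
  have r2: "reach l n 1 [insert a X1, X2, Y] [X1, insert a X2, Y]"
    using g1 g2 by (intro reach_move_next) auto
  have "reach l n 1 [X, {a}, Y] [X1, insert a X2, Y]"
    using g3 g2 split(1) by (intro reach_move_next) auto
  then have r3: "reach l n 1 [X1, insert a X2, Y] [{a}, Y, X]"
    by (rule reach_cyc_eq_both[OF reach_sym cyc_eq_refl cyc_eq_rotate3(1)])
  have "reach l n (1 + 1 + 1) [{a}, X, Y] [{a}, Y, X]"
    using reach_trans[OF reach_trans[OF r1 r2] r3] .
  then show ?thesis
    unfolding solo_def Y_def others_Diff_Diff[OF XO] by (simp add: numeral_3_eq_3)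
qed

lemma reach_solo_compl_small:
  assumes X: "solo_part X" and small: "\<forall>x\<in>X. l x < half - l a"
  shows "reach l n 5 (solo X) (solo (others - X))"
proof -
  have XO: "X \<subseteq> others" and X_sum: "half - l a < sum l X" "sum l X < half"
    using X unfolding solo_part_def by auto
  have "finite X"
    using XO others_subset by (auto intro: finite_subset[OF _ finite_atLeastAtMost])
  moreover have "0 < half - l a"
    using la_lt_half by simp
  ultimately obtain H where H: "H \<subseteq> X" "sum l H < half - l a"
    "H = X \<or> (\<exists>y\<in>X - H. half - l a \<le> sum l H + l y)"
    using greedy_subset[of X "half - l a" l] by blast
  then obtain y where y: "y \<in> X" "y \<notin> H" "half - l a \<le> sum l H + l y"
    using X_sum by auto
  have "H \<noteq> {}"
  proof
    assume "H = {}"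
    then show False
      using y(1,3) small by force
  qed
  define X' where "X' = insert y H"
  have X'_sub: "X' \<subseteq> X" "X' \<subseteq> others"
    using H(1) y(1) XO unfolding X'_def by blast+
  have "finite H"
    using \<open>finite X\<close> H(1) finite_subset by blast
  then have "sum l X' = l y + sum l H"
    using y(2) unfolding X'_def by simp
  moreover have "sum l X' \<le> sum l X"
    using X'_sub XO others_subset by (intro sum_le_sum_subset) auto
  ultimately have X': "solo_part X'"
    unfolding solo_part_def using X'_sub(2) y(3) X_sum sum_ne_half_minus_la[OF X'_sub(2)] by auto
  have r1: "reach l n 1 (solo X) (solo X')"
    using reach_solo_subset[OF X' X X'_sub(1)] by (rule reach_sym)
  have "reach l n 3 (solo X') (solo (others - X'))"
    using X' \<open>H \<noteq> {}\<close> y(2) H(2) small y(1)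
    by (intro reach_solo_compl_split[of X' H "{y}"]) (auto simp: X'_def)
  moreover have "reach l n 1 (solo (others - X')) (solo (others - X))"
    using solo_part_compl[OF X'] solo_part_compl[OF X] X'_sub(1)
    by (intro reach_sym[OF reach_solo_subset]) auto
  ultimately have "reach l n (1 + 3 + 1) (solo X) (solo (others - X))"
    using reach_trans[OF reach_trans[OF r1]] by blast
  then show ?thesis
    by simp
qed

lemma solo_part_singleton:
  assumes "x \<in> others" "half - l a \<le> l x"
  shows "solo_part {x}"
proof -
  have "l x < half"
    using assms(1) others_subset singleton_short by blast
  moreover have "l x \<noteq> half - l a"
    using sum_ne_half_minus_la[of "{x}"] assms(1) by simp
  ultimately show ?thesis
    unfolding solo_part_def using assms by auto
qed

lemma reach_solo_compl:
  assumes conn: "l b + l c < half" and X: "solo_part X"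
  shows "reach l n 5 (solo X) (solo (others - X))"
proof -
  have XO: "X \<subseteq> others"
    using X unfolding solo_part_def by blast
  consider "\<forall>x\<in>X. l x < half - l a" | "\<forall>y\<in>others - X. l y < half - l a"
    | x y where "x \<in> X" "half - l a \<le> l x" "y \<in> others - X" "half - l a \<le> l y"
    by (meson not_le)
  then show ?thesis
  proof cases
    case 1
    then show ?thesis
      using X by (rule reach_solo_compl_small[rotated])
  next
    case 2
    then have "reach l n 5 (solo (others - X)) (solo (others - (others - X)))"
      using solo_part_compl[OF X] by (intro reach_solo_compl_small)
    then show ?thesis
      unfolding others_Diff_Diff[OF XO] by (rule reach_sym)
  next
    case (3 x y)
    have xy: "x \<in> others" "y \<in> others" "x \<noteq> y"
      using 3 XO by auto
    have sx: "solo_part {x}" and sy: "solo_part {y}"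
      using xy 3 by (simp_all add: solo_part_singleton)
    have "l x + l y \<le> l b + l c"
      using pair_le_lb_lc xy unfolding others_def by blast
    moreover have "0 < l y"
      using l_pos xy(2) others_subset by blast
    ultimately have sxy: "solo_part {x, y}"
      unfolding solo_part_def using xy conn 3 by auto
    have r1: "reach l n 1 (solo X) (solo {x})"
      using 3 by (intro reach_sym[OF reach_solo_subset[OF sx X]]) simp
    have r2: "reach l n 1 (solo {x}) (solo {x, y})"
      using reach_solo_subset[OF sx sxy] by simp
    have r3: "reach l n 1 (solo {x, y}) (solo {y})"
      by (intro reach_sym[OF reach_solo_subset[OF sy sxy]]) simp
    have r4: "reach l n 1 (solo {y}) (solo (others - X))"
      using 3 by (intro reach_solo_subset[OF sy solo_part_compl[OF X]]) simp
    have "reach l n (1 + 1 + 1 + 1) (solo X) (solo (others - X))"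
      using reach_trans[OF reach_trans[OF reach_trans[OF r1 r2] r3] r4] .
    then show ?thesis
      by (rule reach_mono) simp
  qed
qed

lemma reach_solo_exchange:
  assumes X: "solo_part X" and Y: "solo_part Y"
    and small: "sum l (X \<inter> Y) < half - l a" "sum l (X - Y) < half - l a"
  shows "reach l n 3 (solo X) (solo Y)"
proof -
  define P Q S U where "P = X \<inter> Y" and "Q = X - Y" and "S = Y - X" and "U = others - (X \<union> Y)"
  have XO: "X \<subseteq> others" "half - l a < sum l X" and YO: "Y \<subseteq> others" "half - l a < sum l (others - Y)"
    using X Y solo_part_compl[OF Y] unfolding solo_part_def by auto
  have sub: "P \<subseteq> {1..n}" "Q \<subseteq> {1..n}" "U \<subseteq> {1..n}" "Q \<subseteq> others"
    using XO(1) others_subset unfolding P_def Q_def U_def by blast+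
  have "sum l X = sum l P + sum l Q"
    using sum_Un_disjoint[of P Q] sub unfolding P_def Q_def by (simp add: Int_Diff_Un Int_Diff_disjoint)
  then have "P \<noteq> {}"
    using XO(2) small unfolding P_def[symmetric] Q_def[symmetric] by auto
  have oY: "others - Y = U \<union> Q"
    using XO(1) unfolding Q_def U_def by blast
  moreover have "U \<inter> Q = {}"
    unfolding U_def Q_def by blast
  ultimately have "sum l (others - Y) = sum l U + sum l Q"
    using sum_Un_disjoint[of U Q] sub by simp
  then have "U \<noteq> {}"
    using YO(2) small(2) unfolding Q_def[symmetric] by auto
  have g0: "gvertex l n [X, others - X, {a}]"
    using gvertex_solo[OF X] gvertex_rotate3 unfolding solo_def by blast
  have "Q \<subseteq> X" "Q \<noteq> X" "X - Q = P"
    using \<open>P \<noteq> {}\<close> unfolding P_def Q_def by blast+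
  moreover have "short l n ({a} \<union> Q)"
    using small(2) sum_insert_a[OF sub(4)] unfolding Q_def by (simp add: short_iff)
  ultimately have g1: "gvertex l n [P, others - X, {a} \<union> Q]"
    and step1: "reach l n 1 [X, others - X, {a}] [P, others - X, {a} \<union> Q]"
    using transfer_prev[OF g0, of Q] by auto
  have r1: "reach l n 1 (solo X) [others - X, {a} \<union> Q, P]"
    unfolding solo_def by (rule reach_cyc_eq_both[OF step1 cyc_eq_rotate3(2) cyc_eq_rotate3(1)])
  have "gvertex l n [others - X, {a} \<union> Q, P]"
    using g1 gvertex_rotate3 by blast
  moreover have "S \<subseteq> others - X" "S \<noteq> others - X" "others - X - S = U" "P \<union> S = Y"
    using YO(1) \<open>U \<noteq> {}\<close> unfolding P_def S_def U_def by blast+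
  moreover have "short l n Y"
    using Y unfolding solo_part_def short_iff by blast
  ultimately have g2: "gvertex l n [U, {a} \<union> Q, Y]"
    and step2: "reach l n 1 [others - X, {a} \<union> Q, P] [U, {a} \<union> Q, Y]"
    using transfer_prev[of "others - X" "{a} \<union> Q" P S] by auto
  have r2: "reach l n 1 [others - X, {a} \<union> Q, P] [{a} \<union> Q, Y, U]"
    by (rule reach_cyc_eq_both[OF step2 cyc_eq_refl cyc_eq_rotate3(1)])
  have "gvertex l n [{a} \<union> Q, Y, U]"
    using g2 gvertex_rotate3 by blast
  moreover have "short l n (U \<union> Q)"
    using solo_part_compl[OF Y] oY unfolding solo_part_def short_iff by simp
  moreover have "{a} \<union> Q - Q = {a}"
    using sub(4) by auto
  ultimately have r3: "reach l n 1 [{a} \<union> Q, Y, U] (solo Y)"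
    using transfer_prev(2)[of "{a} \<union> Q" Y U Q] oY sub(4) unfolding solo_def by auto
  have "reach l n (1 + 1 + 1) (solo X) (solo Y)"
    using reach_trans[OF reach_trans[OF r1 r2] r3] .
  then show ?thesis
    by (simp add: numeral_3_eq_3)
qed

lemma reach_solo_solo:
  assumes conn: "l b + l c < half" and X: "solo_part X" and Y: "solo_part Y"
  shows "reach l n 7 (solo X) (solo Y)"
proof -
  have XO: "X \<subseteq> others" "sum l X < half" and YO: "Y \<subseteq> others"
    using X Y unfolding solo_part_def by auto
  have sum_le: "sum l Z \<le> sum l X" if "Z \<subseteq> X" for Z
    using that XO(1) others_subset by (intro sum_le_sum_subset) auto
  have "sum l (X \<inter> Y) \<noteq> half - l a" "sum l (X - Y) \<noteq> half - l a"
    using sum_ne_half_minus_la[of "X \<inter> Y"] sum_ne_half_minus_la[of "X - Y"] XO(1) by blast+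
  then consider "half - l a < sum l (X \<inter> Y)" | "half - l a < sum l (X - Y)"
    | "sum l (X \<inter> Y) < half - l a" "sum l (X - Y) < half - l a"
    by (metis linorder_neqE_linordered_idom)
  then show ?thesis
  proof cases
    case 1
    then have P: "solo_part (X \<inter> Y)"
      unfolding solo_part_def using XO sum_le[of "X \<inter> Y"] by auto
    have "reach l n 1 (solo X) (solo (X \<inter> Y))"
      by (rule reach_sym[OF reach_solo_subset[OF P X]]) simp
    moreover have "reach l n 1 (solo (X \<inter> Y)) (solo Y)"
      by (rule reach_solo_subset[OF P Y]) simp
    ultimately have "reach l n (1 + 1) (solo X) (solo Y)"
      by (rule reach_trans)
    then show ?thesis
      by (rule reach_mono) simp
  next
    case 2
    then have Q: "solo_part (X - Y)"
      unfolding solo_part_def using XO sum_le[of "X - Y"] by auto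
    have "reach l n 1 (solo X) (solo (X - Y))"
      by (rule reach_sym[OF reach_solo_subset[OF Q X]]) simp
    moreover have "reach l n 1 (solo (X - Y)) (solo (others - Y))"
      using XO(1) by (intro reach_solo_subset[OF Q solo_part_compl[OF Y]]) blast
    moreover have "reach l n 5 (solo (others - Y)) (solo Y)"
      using reach_solo_compl[OF conn solo_part_compl[OF Y]] others_Diff_Diff[OF YO] by simp
    ultimately have "reach l n (1 + 1 + 5) (solo X) (solo Y)"
      by (rule reach_trans[OF reach_trans])
    then show ?thesis
      by simp
  next
    case 3
    then have "reach l n 3 (solo X) (solo Y)"
      by (rule reach_solo_exchange[OF X Y])
    then show ?thesis
      by (rule reach_mono) simp
  qed
qed

theorem connected_diameter:
  assumes "l b + l c < half" "gvertex l n u" "gvertex l n v"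
  shows "path_le l n 13 u v"
proof -
  obtain X where X: "solo_part X" "reach l n 2 u (solo X)"
    using reach_solo[OF assms(2)] by blast
  obtain Y where Y: "solo_part Y" "reach l n 2 v (solo Y)"
    using reach_solo[OF assms(3)] by blast
  have "reach l n (2 + 7 + 2) u v"
    using reach_trans[OF reach_trans[OF X(2) reach_solo_solo[OF assms(1) X(1) Y(1)]] reach_sym[OF Y(2)]] .
  then have "reach l n 13 u v"
    by (rule reach_mono) simp
  then show ?thesis
    by (rule reach_imp_path_le)
qed

end

section \<open>The disconnected case\<close>

definition follows :: "'a \<Rightarrow> 'a \<Rightarrow> 'a set list \<Rightarrow> bool" where
  "follows x y u \<longleftrightarrow> (x \<in> u ! 0 \<and> y \<in> u ! 1) \<or> (x \<in> u ! 1 \<and> y \<in> u ! 2) \<or> (x \<in> u ! 2 \<and> y \<in> u ! 0)"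

definition separated :: "'a \<Rightarrow> 'a \<Rightarrow> 'a set list \<Rightarrow> bool" where
  "separated x y u \<longleftrightarrow> (\<forall>P\<in>set u. x \<in> P \<longrightarrow> y \<notin> P)"

lemma follows_rotate3: "follows x y [Y, Z, X] \<longleftrightarrow> follows x y [X, Y, Z]"
  unfolding follows_def by auto

lemma follows_cyc_eq: "cyc_eq [X, Y, Z] v \<Longrightarrow> follows x y v \<longleftrightarrow> follows x y [X, Y, Z]"
  unfolding cyc_eq_def using rotate3_cases follows_rotate3 by metis

text \<open>\<open>y\<close> comes after \<open>x\<close> in the cyclic order of the four parts, possibly skipping a part that
  contains none of \<open>x, y, z\<close>.\<close>

definition cyclic4 :: "'a \<Rightarrow> 'a \<Rightarrow> 'a \<Rightarrow> 'a set list \<Rightarrow> bool" where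
  "cyclic4 x y z e \<longleftrightarrow>
     (x \<in> e ! 0 \<and> (y \<in> e ! 1 \<or> y \<in> e ! 2 \<and> z \<in> e ! 3)) \<or> (x \<in> e ! 1 \<and> (y \<in> e ! 2 \<or> y \<in> e ! 3 \<and> z \<in> e ! 0)) \<or>
     (x \<in> e ! 2 \<and> (y \<in> e ! 3 \<or> y \<in> e ! 0 \<and> z \<in> e ! 1)) \<or> (x \<in> e ! 3 \<and> (y \<in> e ! 0 \<or> y \<in> e ! 1 \<and> z \<in> e ! 2))"

lemma follows_merge4:
  assumes disj: "E0 \<inter> E1 = {}" "E0 \<inter> E2 = {}" "E0 \<inter> E3 = {}" "E1 \<inter> E2 = {}" "E1 \<inter> E3 = {}" "E2 \<inter> E3 = {}"
    and cover: "{x, y, z} \<subseteq> E0 \<union> E1 \<union> E2 \<union> E3" and "i < 4"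
    and sep: "separated x y (merge4 [E0, E1, E2, E3] i)" "separated x z (merge4 [E0, E1, E2, E3] i)"
      "separated y z (merge4 [E0, E1, E2, E3] i)"
  shows "follows x y (merge4 [E0, E1, E2, E3] i) \<longleftrightarrow> cyclic4 x y z [E0, E1, E2, E3]"
proof -
  from \<open>i < 4\<close> consider "i = 0" | "i = 1" | "i = 2" | "i = 3"
    by linarith
  then show ?thesis
    using disj cover sep unfolding follows_def separated_def cyclic4_def
    by cases (simp add: merge4_def numeral_eq_Suc disjoint_iff, smt)+
qed

context linkage_top
begin

lemma not_short_two_of_top:
  assumes disc: "half < l b + l c" and J: "J \<subseteq> {1..n}" "x \<in> J" "y \<in> J" "x \<noteq> y"
    and xy: "x \<in> {a, b, c}" "y \<in> {a, b, c}"
  shows "\<not> short l n J"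
proof -
  have "l b + l c \<le> l x + l y"
    using xy \<open>x \<noteq> y\<close> lb_le_la lc_le_lb by auto
  moreover have "l x + l y \<le> sum l J"
    using sum_le_sum_subset[of "{x, y}" J] J by simp
  ultimately show ?thesis
    using disc by (simp add: short_iff)
qed

lemma gvertex_separated:
  assumes disc: "half < l b + l c" and "gvertex l n u" "x \<in> {a, b, c}" "y \<in> {a, b, c}" "x \<noteq> y"
  shows "separated x y u"
proof -
  obtain X Y Z where u: "u = [X, Y, Z]"
    using assms(2) by (rule gvertexE)
  have "P \<subseteq> {1..n}" "short l n P" if "P \<in> set u" for P
    using that gvertexD(7-10)[OF assms(2)[unfolded u]] unfolding u by auto
  then show ?thesis
    unfolding separated_def using not_short_two_of_top[OF disc] assms(3-5) by blast
qed

lemma gadj_follows: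
  assumes disc: "half < l b + l c" and "gadj l n u v"
  shows "follows a b u \<longleftrightarrow> follows a b v"
proof -
  obtain e i j where u: "gvertex l n u" and v: "gvertex l n v" and e: "admissible l n e" "length e = 4"
    and ij: "i < 4" "j < 4" "cyc_eq (merge4 e i) u" "cyc_eq (merge4 e j) v"
    using assms(2) unfolding gadj_def by blast
  obtain E0 E1 E2 E3 where E: "e = [E0, E1, E2, E3]"
    using e(2) by (auto simp: length_Suc_conv numeral_eq_Suc)
  have disj: "E0 \<inter> E1 = {}" "E0 \<inter> E2 = {}" "E0 \<inter> E3 = {}" "E1 \<inter> E2 = {}" "E1 \<inter> E3 = {}"
      "E2 \<inter> E3 = {}" and cover: "{a, b, c} \<subseteq> E0 \<union> E1 \<union> E2 \<union> E3"
    using e(1) a_in b_in c_in unfolding E admissible4_iff by auto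
  have follows_merge: "follows a b w \<longleftrightarrow> cyclic4 a b c e"
    if "k < 4" "cyc_eq (merge4 e k) w" "gvertex l n w" for k w
  proof -
    have g: "gvertex l n (merge4 e k)"
      using gvertex_cyc_eq[OF that(3) cyc_eq_sym[OF that(2)]] .
    obtain X Y Z where m: "merge4 e k = [X, Y, Z]"
      using g by (rule gvertexE)
    have "follows a b w \<longleftrightarrow> follows a b (merge4 e k)"
      using follows_cyc_eq[OF that(2)[unfolded m]] m by simp
    also have "\<dots> \<longleftrightarrow> cyclic4 a b c e"
      unfolding E using disj cover that(1) gvertex_separated[OF disc g[unfolded E]] a_ne_b a_ne_c b_ne_c
      by (intro follows_merge4) auto
    finally show ?thesis .
  qed
  show ?thesis
    using follows_merge[OF ij(1,3) u] follows_merge[OF ij(2,4) v] by simp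
qed

lemma path_le_follows:
  assumes disc: "half < l b + l c" and "path_le l n k u v" "gvertex l n u"
  shows "follows a b u \<longleftrightarrow> follows a b v"
proof -
  obtain ps where ps: "ps \<noteq> []" "cyc_eq (ps ! 0) u" "cyc_eq (ps ! (length ps - 1)) v"
    "\<forall>i. i + 1 < length ps \<longrightarrow> gadj l n (ps ! i) (ps ! (i + 1))"
    using assms(2) unfolding path_le_def by blast
  have g0: "gvertex l n (ps ! 0)"
    using gvertex_cyc_eq[OF assms(3) cyc_eq_sym[OF ps(2)]] .
  have inv: "gvertex l n (ps ! i) \<and> (follows a b (ps ! i) \<longleftrightarrow> follows a b (ps ! 0))"
    if "i < length ps" for i
    using that
  proof (induction i)
    case (Suc i)
    then have step: "gadj l n (ps ! i) (ps ! Suc i)"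
      using ps(4) by simp
    then have "gvertex l n (ps ! Suc i)"
      unfolding gadj_def by blast
    then show ?case
      using Suc gadj_follows[OF disc step] by simp
  qed (simp add: g0)
  have last: "gvertex l n (ps ! (length ps - 1))"
    "follows a b (ps ! (length ps - 1)) \<longleftrightarrow> follows a b (ps ! 0)"
    using inv[of "length ps - 1"] ps(1) by auto
  have cyc: "follows a b w' \<longleftrightarrow> follows a b w" if w: "gvertex l n w" and ww': "cyc_eq w w'" for w w'
  proof -
    obtain X Y Z where "w = [X, Y, Z]"
      using w by (rule gvertexE)
    then show ?thesis
      using follows_cyc_eq[of X Y Z w'] ww' by simp
  qed
  show ?thesis
    using cyc[OF g0 ps(2)] cyc[OF last(1) ps(3)] last(2) by simp
qed

definition hub :: "nat \<Rightarrow> nat set list" where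
  "hub x = [{a}, {x}, {1..n} - {a, x}]"

lemma reach_hub:
  assumes g: "gvertex l n [A, B, C]" and aA: "a \<in> A" and xB: "x \<in> B" and long: "half < l a + l x"
  shows "reach l n 2 [A, B, C] (hub x)"
proof -
  note G = gvertexD[OF g]
  define A' where "A' = A - {a}"
  define R where "R = C \<union> A' \<union> (B - {x})"
  have "A \<subseteq> {1..n}" "B \<subseteq> {1..n}" "C \<subseteq> {1..n}"
    using G(7) by blast+
  then have sub: "A' \<subseteq> others" "x \<in> {1..n}"
    using xB unfolding A'_def others_def by blast+
  have "a \<noteq> x"
    using G(4) aA xB by blast
  have R_eq: "{1..n} - {a, x} = R"
    using G(4-7) aA xB unfolding A'_def R_def by blast
  have sum_A: "sum l A = l a + sum l A'"
    using sum_insert_a[OF sub(1)] aA unfolding A'_def by (simp add: insert_absorb)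
  have sum_CA': "sum l (C \<union> A') = sum l C + sum l A'"
    using sub(1) others_subset G(5) \<open>C \<subseteq> {1..n}\<close> unfolding A'_def by (intro sum_Un_disjoint) auto
  have "l x \<le> sum l B"
    using sum_le_sum_subset[of "{x}" B] xB \<open>B \<subseteq> {1..n}\<close> by simp
  then have "short l n (C \<union> A')"
    using sum_CA' sum_A gvertex_sum[OF g] long by (simp add: short_iff)
  moreover have "A - A' = {a}"
    using aA unfolding A'_def by blast
  ultimately obtain g1: "gvertex l n [{a}, B, C \<union> A']" and r1: "reach l n 1 [A, B, C] [{a}, B, C \<union> A']"
    using transfer_prev[OF g, of A'] aA unfolding A'_def by auto
  have "sum l R = total_len l n - l a - l x"
    using sum_compl[of "{a, x}"] a_in sub(2) \<open>a \<noteq> x\<close> unfolding R_eq by simp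
  then have "short l n (C \<union> A' \<union> (B - {x}))"
    using long unfolding R_def[symmetric] by (simp add: short_iff)
  moreover have "gvertex l n [B, C \<union> A', {a}]"
    using g1 gvertex_rotate3 by blast
  moreover have "B - (B - {x}) = {x}"
    using xB by blast
  ultimately have "reach l n 1 [B, C \<union> A', {a}] [{x}, R, {a}]"
    using transfer_next(2)[of B "C \<union> A'" "{a}" "B - {x}"] xB unfolding R_def by auto
  then have r2: "reach l n 1 [{a}, B, C \<union> A'] (hub x)"
    unfolding hub_def R_eq
    by (rule reach_cyc_eq_both[OF _ cyc_eq_rotate3(2) cyc_eq_rotate3(2)])
  have "reach l n (1 + 1) [A, B, C] (hub x)"
    using reach_trans[OF r1 r2] .
  then show ?thesis
    by (simp add: numeral_2_eq_2)
qed

lemma reach_hub_from_part: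
  assumes disc: "half < l b + l c" and g: "gvertex l n [A, B, C]" and aA: "a \<in> A"
  shows "follows a b [A, B, C] \<and> reach l n 2 [A, B, C] (hub b)
    \<or> \<not> follows a b [A, B, C] \<and> reach l n 2 [A, B, C] (hub c)"
proof -
  note G = gvertexD[OF g]
  have sub: "A \<subseteq> {1..n}" "C \<subseteq> {1..n}"
    using G(7) by blast+
  have "b \<notin> A" "c \<notin> A"
    using not_short_two_of_top[OF disc sub(1) aA] a_ne_b a_ne_c G(8) by auto
  show ?thesis
  proof (cases "b \<in> B")
    case True
    then have "follows a b [A, B, C]"
      using aA unfolding follows_def by simp
    moreover have "half < l a + l b"
      using disc lc_le_lb lb_le_la by linarith
    ultimately show ?thesis
      using reach_hub[OF g aA True] by blast
  next
    case False
    then have "b \<in> C"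
      using b_in G(7) \<open>b \<notin> A\<close> by blast
    then have "c \<notin> C"
      using not_short_two_of_top[OF disc sub(2)] b_ne_c G(10) by auto
    then have "c \<in> B"
      using c_in G(7) \<open>c \<notin> A\<close> by blast
    have "\<not> follows a b [A, B, C]"
      using aA False \<open>b \<notin> A\<close> G(4,5) unfolding follows_def by auto
    moreover have "half < l a + l c"
      using disc lb_le_la by linarith
    ultimately show ?thesis
      using reach_hub[OF g aA \<open>c \<in> B\<close>] by blast
  qed
qed

lemma reach_hub_by_orientation:
  assumes disc: "half < l b + l c" and "gvertex l n u"
  shows "follows a b u \<and> reach l n 2 u (hub b) \<or> \<not> follows a b u \<and> reach l n 2 u (hub c)"
proof -
  obtain A B C where u: "cyc_eq u [A, B, C]" and "gvertex l n [A, B, C]" "a \<in> A"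
    using assms(2) a_in by (rule gvertex_rotate_to)
  then have "follows a b [A, B, C] \<and> reach l n 2 [A, B, C] (hub b)
    \<or> \<not> follows a b [A, B, C] \<and> reach l n 2 [A, B, C] (hub c)"
    by (intro reach_hub_from_part[OF disc])
  moreover have "follows a b u \<longleftrightarrow> follows a b [A, B, C]"
    using follows_cyc_eq[OF cyc_eq_sym[OF u]] .
  ultimately show ?thesis
    using reach_cyc_eq_both[OF _ cyc_eq_sym[OF u] cyc_eq_refl] by blast
qed

theorem disconnected_diameter:
  assumes disc: "half < l b + l c" and "gvertex l n u" "gvertex l n v" "same_component l n u v"
  shows "path_le l n 7 u v"
proof -
  have "follows a b u \<longleftrightarrow> follows a b v"
    using assms(4) path_le_follows[OF disc _ assms(2)] unfolding same_component_def by blast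
  then obtain H where "reach l n 2 u H" "reach l n 2 v H"
    using reach_hub_by_orientation[OF disc assms(2)] reach_hub_by_orientation[OF disc assms(3)] by blast
  then have "reach l n (2 + 2) u v"
    by (blast intro: reach_trans reach_sym)
  then have "reach l n 7 u v"
    by (rule reach_mono) simp
  then show ?thesis
    by (rule reach_imp_path_le)
qed

end

theorem mainTheorem9:
  fixes l :: "nat \<Rightarrow> real" and n a b c :: nat
  assumes "n \<ge> 4"
    and "length_vector l n" and "strict_triangle l n" and "generic l n"
    and "a \<in> {1..n}" and "b \<in> {1..n}" and "c \<in> {1..n}"
    and "a \<noteq> b" and "a \<noteq> c" and "b \<noteq> c"
    and "l a \<ge> l b" and "l b \<ge> l c"
    and "\<forall>i\<in>{1..n} - {a, b, c}. l i \<le> l c"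
  shows "(l b + l c < total_len l n / 2 \<longrightarrow>
            (\<forall>u v. gvertex l n u \<and> gvertex l n v \<longrightarrow> path_le l n 13 u v))
       \<and> (l b + l c > total_len l n / 2 \<longrightarrow>
            (\<forall>u v. gvertex l n u \<and> gvertex l n v \<and> same_component l n u v
                 \<longrightarrow> path_le l n 7 u v))"
proof -
  interpret linkage_top l n a b c
    using assms(2-) by unfold_locales auto
  show ?thesis
    using connected_diameter disconnected_diameter by blast
qed

end
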